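(* There is no correct translation from SYNCSIMPLE into $\mathrm{LOCKSIMPLE}_{1,IS}$, for either initial store $IS = (\Box)$ or $IS = (\blacksquare)$.
   Context: SYNCSIMPLE: subprocesses $\mathcal{U} ::= \checkmark \mid 0 \mid\ !\mathcal{U} \mid\ ?\mathcal{U}$; processes are finite parallel compositions $\mathcal{U}_1 \mid \cdots \mid \mathcal{U}_n$ (parallel composition is associative, commutative, with $0$ as identity). The only reduction is $!\mathcal{U}_1 \mid ?\mathcal{U}_2 \mid \mathcal{P} \to \mathcal{U}_1 \mid \mathcal{U}_2 \mid \mathcal{P}$. A process is successful if it has the form $\checkmark \mid \mathcal{P}$. $\mathrm{LOCKSIMPLE}_{k,IS}$ (here $k=1$): subprocesses $\mathcal{U} ::= 0 \mid \checkmark \mid P_i\mathcal{U} \mid T_i\mathcal{U}$ ($1\le i\le k$), processes are parallel compositions of subprocesses. Execution acts on states $(\mathcal{P},\mathcal{C})$ with locks $C_i\in\{\Box \text{ (empty)},\blacksquare \text{ (full)}\}$, starting from the initial store $IS$. Rules: $(P_i\mathcal{U}\mid\mathcal{P},\mathcal{C}[C_i=\Box]) \to (\mathcal{U}\mid\mathcal{P},\mathcal{C}[C_i\mapsto\blacksquare])$ (so $P_i$ blocks on a full lock), and $(T_i\mathcal{U}\mid\mathcal{P},\mathcal{C}) \to (\mathcal{U}\mid\mathcal{P},\mathcal{C}[C_i\mapsto\Box])$ (take never blocks). A state is successful if its process contains a top-level $\checkmark$. In both calculi, a process (state) is may-convergent if some reduction sequence reaches a successful process (state), and must-convergent if every process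 (state) reachable from it is may-convergent. A translation is a mapping $\tau$ from SYNCSIMPLE-processes to $\mathrm{LOCKSIMPLE}_{k,IS}$-processes; it is compositional if $\tau(0)=0$, $\tau(\checkmark)=\checkmark$, $\tau(\mathcal{P}_1\mid\mathcal{P}_2)=\tau(\mathcal{P}_1)\mid\tau(\mathcal{P}_2)$, $\tau(\mathcal{U})$ contains no parallel operator, and $\tau(!\mathcal{U})=\tau(!)\tau(\mathcal{U})$, $\tau(?\mathcal{U})=\tau(?)\tau(\mathcal{U})$. It is correct if for every SYNCSIMPLE-process $P$: $P$ is may-convergent iff $\tau(P)$ is, and $P$ is must-convergent iff $\tau(P)$ is. The translations considered in this result are compositional. *)

theory Defs
  imports Main "HOL-Library.Multiset"
begin

datatype ssub = SOk | SZero | SSend ssub | SRecv ssub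

type_synonym sproc = "ssub multiset"

definition sstep :: "sproc \<Rightarrow> sproc \<Rightarrow> bool" where
  "sstep P P' \<longleftrightarrow> (\<exists>U1 U2 R. P = {#SSend U1, SRecv U2#} + R \<and> P' = {#U1, U2#} + R)"

definition ssuccessful :: "sproc \<Rightarrow> bool" where
  "ssuccessful P \<longleftrightarrow> SOk \<in># P"

definition smay :: "sproc \<Rightarrow> bool" where
  "smay P \<longleftrightarrow> (\<exists>P'. sstep\<^sup>*\<^sup>* P P' \<and> ssuccessful P')"

definition smust :: "sproc \<Rightarrow> bool" where
  "smust P \<longleftrightarrow> (\<forall>P'. sstep\<^sup>*\<^sup>* P P' \<longrightarrow> smay P')"

datatype lsub = LOk | LZero | LPut lsub | LTake lsub

datatype lockval = Empty | Full

type_synonym lstate = "lsub multiset \<times> lockval"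

inductive lstep :: "lstate \<Rightarrow> lstate \<Rightarrow> bool" where
  put: "lstep ({#LPut U#} + R, Empty) ({#U#} + R, Full)"
| take: "lstep ({#LTake U#} + R, C) ({#U#} + R, Empty)"

definition lsuccessful :: "lstate \<Rightarrow> bool" where
  "lsuccessful S \<longleftrightarrow> LOk \<in># fst S"

definition lmay :: "lstate \<Rightarrow> bool" where
  "lmay S \<longleftrightarrow> (\<exists>S'. lstep\<^sup>*\<^sup>* S S' \<and> lsuccessful S')"

definition lmust :: "lstate \<Rightarrow> bool" where
  "lmust S \<longleftrightarrow> (\<forall>S'. lstep\<^sup>*\<^sup>* S S' \<longrightarrow> lmay S')"

text \<open>A compositional translation is determined by the images of the two prefixes
  ! and ?, each a (possibly empty) sequence of lock actions P_1 / T_1.\<close>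

datatype act = AP | AT

fun prefix :: "act list \<Rightarrow> lsub \<Rightarrow> lsub" where
  "prefix [] u = u"
| "prefix (AP # as) u = LPut (prefix as u)"
| "prefix (AT # as) u = LTake (prefix as u)"

fun trsub :: "act list \<Rightarrow> act list \<Rightarrow> ssub \<Rightarrow> lsub" where
  "trsub ws wr SOk = LOk"
| "trsub ws wr SZero = LZero"
| "trsub ws wr (SSend U) = prefix ws (trsub ws wr U)"
| "trsub ws wr (SRecv U) = prefix wr (trsub ws wr U)"

definition trproc :: "act list \<Rightarrow> act list \<Rightarrow> sproc \<Rightarrow> lsub multiset" where
  "trproc ws wr P = image_mset (trsub ws wr) P"

definition correct_translation :: "lockval \<Rightarrow> act list \<Rightarrow> act list \<Rightarrow> bool" where
  "correct_translation IS ws wr \<longleftrightarrow>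
     (\<forall>P. (smay P \<longleftrightarrow> lmay (trproc ws wr P, IS)) \<and>
          (smust P \<longleftrightarrow> lmust (trproc ws wr P, IS)))"

end

theory Submission
  imports Defs
begin

text \<open>
  Under a compositional translation each prefix becomes a fixed sequence of lock actions, which a
  single thread executes deterministically. If the image of \<open>!\<close> (or of \<open>?\<close>) ran to its end from
  the initial store, the translation of \<open>!\<checkmark>\<close> (resp. \<open>?\<checkmark>\<close>), which cannot converge, would reach
  \<open>\<checkmark>\<close>. So both images must get stuck at a put on a full lock. But then the translation of the
  must-convergent process \<open>!\<checkmark> | ?\<checkmark>\<close> can run both threads up to such a put and deadlock, with
  the lock full and no \<open>\<checkmark>\<close> in sight.
\<close>

fun blocks :: "act list \<Rightarrow> lockval \<Rightarrow> bool" where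
  "blocks [] c = False"
| "blocks (AP # w) Empty = blocks w Full"
| "blocks (AP # w) Full = True"
| "blocks (AT # w) c = blocks w Empty"

lemma blocks_Full: "blocks w c \<Longrightarrow> blocks w Full"
  by (induction w c rule: blocks.induct) auto

lemma prefix_runs_to_end:
  "\<not> blocks w c \<Longrightarrow> \<exists>c'. lstep\<^sup>*\<^sup>* ({#prefix w u#} + R, c) ({#u#} + R, c')"
proof (induction w c rule: blocks.induct)
  case (2 w)
  then obtain c' where "lstep\<^sup>*\<^sup>* ({#prefix w u#} + R, Full) ({#u#} + R, c')" by auto
  moreover have "lstep ({#prefix (AP # w) u#} + R, Empty) ({#prefix w u#} + R, Full)"
    using lstep.put[of "prefix w u" R] by simp
  ultimately show ?case by (meson converse_rtranclp_into_rtranclp)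
next
  case (4 w c)
  then obtain c' where "lstep\<^sup>*\<^sup>* ({#prefix w u#} + R, Empty) ({#u#} + R, c')" by auto
  moreover have "lstep ({#prefix (AT # w) u#} + R, c) ({#prefix w u#} + R, Empty)"
    using lstep.take[of "prefix w u" R c] by simp
  ultimately show ?case by (meson converse_rtranclp_into_rtranclp)
qed auto

lemma lmay_prefix_ok_if_not_blocks: "\<not> blocks w c \<Longrightarrow> lmay ({#prefix w LOk#}, c)"
  using prefix_runs_to_end[of w c LOk "{#}"] unfolding lmay_def lsuccessful_def by fastforce

lemma prefix_runs_to_blocking_put:
  "blocks w c \<Longrightarrow> \<exists>w'. lstep\<^sup>*\<^sup>* ({#prefix w u#} + R, c) ({#LPut (prefix w' u)#} + R, Full)"
proof (induction w c rule: blocks.induct)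
  case (2 w)
  then obtain w' where "lstep\<^sup>*\<^sup>* ({#prefix w u#} + R, Full) ({#LPut (prefix w' u)#} + R, Full)"
    by auto
  moreover have "lstep ({#prefix (AP # w) u#} + R, Empty) ({#prefix w u#} + R, Full)"
    using lstep.put[of "prefix w u" R] by simp
  ultimately show ?case by (meson converse_rtranclp_into_rtranclp)
next
  case (3 w)
  have "lstep\<^sup>*\<^sup>* ({#prefix (AP # w) u#} + R, Full) ({#LPut (prefix w u)#} + R, Full)"
    by simp
  then show ?case by blast
next
  case (4 w c)
  then obtain w' where "lstep\<^sup>*\<^sup>* ({#prefix w u#} + R, Empty) ({#LPut (prefix w' u)#} + R, Full)"
    by auto
  moreover have "lstep ({#prefix (AT # w) u#} + R, c) ({#prefix w u#} + R, Empty)"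
    using lstep.take[of "prefix w u" R c] by simp
  ultimately show ?case by (meson converse_rtranclp_into_rtranclp)
qed auto

lemma lmay_stuck_iff: "(\<And>S'. \<not> lstep S S') \<Longrightarrow> lmay S \<longleftrightarrow> lsuccessful S"
  unfolding lmay_def by (metis converse_rtranclpE rtranclp.rtrancl_refl)

lemma lstep_Full_puts_stuck:
  assumes "set_mset M \<subseteq> range LPut"
  shows "\<not> lstep (M, Full) S"
proof
  assume "lstep (M, Full) S"
  then show False
  proof cases
    case (take U R)
    then have "LTake U \<in># M"
      by simp
    with assms show False
      by blast
  qed
qed

lemma not_lmay_Full_puts:
  assumes "set_mset M \<subseteq> range LPut"
  shows "\<not> lmay (M, Full)"
proof -
  have "LOk \<notin># M"
    using assms by blast
  then show ?thesis
    by (simp add: lmay_stuck_iff lstep_Full_puts_stuck[OF assms] lsuccessful_def)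
qed

lemma blocking_pair_not_lmust:
  assumes "blocks w1 c" and "blocks w2 c"
  shows "\<not> lmust ({#prefix w1 u1, prefix w2 u2#}, c)"
proof -
  obtain a where run1: "lstep\<^sup>*\<^sup>* ({#prefix w1 u1#} + {#prefix w2 u2#}, c)
      ({#LPut (prefix a u1)#} + {#prefix w2 u2#}, Full)"
    using prefix_runs_to_blocking_put[OF assms(1)] by blast
  obtain b where run2: "lstep\<^sup>*\<^sup>* ({#prefix w2 u2#} + {#LPut (prefix a u1)#}, Full)
      ({#LPut (prefix b u2)#} + {#LPut (prefix a u1)#}, Full)"
    using prefix_runs_to_blocking_put[OF blocks_Full[OF assms(2)]] by blast
  have "lstep\<^sup>*\<^sup>* ({#prefix w1 u1, prefix w2 u2#}, c)
      ({#LPut (prefix b u2), LPut (prefix a u1)#}, Full)"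
    using rtranclp_trans[OF run1 run2[unfolded add.commute[of "{#prefix w2 u2#}"]]]
    by (simp add: add_mset_commute)
  moreover have "\<not> lmay ({#LPut (prefix b u2), LPut (prefix a u1)#}, Full)"
    by (rule not_lmay_Full_puts) auto
  ultimately show ?thesis
    unfolding lmust_def by blast
qed

lemma smay_stuck_iff: "(\<And>P'. \<not> sstep P P') \<Longrightarrow> smay P \<longleftrightarrow> ssuccessful P"
  unfolding smay_def by (metis converse_rtranclpE rtranclp.rtrancl_refl)

lemma singleton_sstep_stuck: "\<not> sstep {#U#} P"
  unfolding sstep_def by (auto dest: arg_cong[where f = size])

lemma not_smay_singleton: "U \<noteq> SOk \<Longrightarrow> \<not> smay {#U#}"
  by (simp add: smay_stuck_iff singleton_sstep_stuck ssuccessful_def)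

lemma sstep_preserves_success: "sstep P P' \<Longrightarrow> ssuccessful P \<Longrightarrow> ssuccessful P'"
  unfolding sstep_def ssuccessful_def by auto

lemma sstep_from_send_recv: "sstep {#SSend U1, SRecv U2#} P' \<Longrightarrow> P' = {#U1, U2#}"
  unfolding sstep_def by (auto simp: add_eq_conv_ex dest: arg_cong[where f = size])

lemma smust_send_recv_ok: "smust {#SSend SOk, SRecv SOk#}"
  unfolding smust_def
proof (intro allI impI)
  fix P'
  assume "sstep\<^sup>*\<^sup>* {#SSend SOk, SRecv SOk#} P'"
  then show "smay P'"
  proof (cases rule: converse_rtranclpE)
    case base
    have "sstep P' {#SOk, SOk#}"
      unfolding sstep_def base[symmetric] by (intro exI[of _ SOk] exI[of _ "{#}"]) simp
    then show ?thesis
      unfolding smay_def ssuccessful_def by (intro exI[of _ "{#SOk, SOk#}"]) auto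
  next
    case (step Q)
    then have "sstep\<^sup>*\<^sup>* {#SOk, SOk#} P'"
      using sstep_from_send_recv by blast
    then have "ssuccessful P'"
      by induction (auto simp: ssuccessful_def dest: sstep_preserves_success)
    then show ?thesis
      unfolding smay_def by blast
  qed
qed

theorem theorem3p2:
  fixes IS :: lockval
  shows "\<not> (\<exists>ws wr. correct_translation IS ws wr)"
proof
  assume "\<exists>ws wr. correct_translation IS ws wr"
  then obtain ws wr where correct:
    "\<And>P. smay P \<longleftrightarrow> lmay (trproc ws wr P, IS)"
    "\<And>P. smust P \<longleftrightarrow> lmust (trproc ws wr P, IS)"
    unfolding correct_translation_def by blast
  have "blocks ws IS"
    using correct(1)[of "{#SSend SOk#}"] not_smay_singleton[of "SSend SOk"]
      lmay_prefix_ok_if_not_blocks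
    by (auto simp: trproc_def)
  moreover have "blocks wr IS"
    using correct(1)[of "{#SRecv SOk#}"] not_smay_singleton[of "SRecv SOk"]
      lmay_prefix_ok_if_not_blocks
    by (auto simp: trproc_def)
  ultimately have "\<not> lmust (trproc ws wr {#SSend SOk, SRecv SOk#}, IS)"
    using blocking_pair_not_lmust by (simp add: trproc_def)
  with correct(2) smust_send_recv_ok show False
    by blast
qed

end
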